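(* Let $u_1\neq u_2$ be the roots of $B(u)$, $v_i=-A(u_i)=-q_1^2u_i-2q_1q_2$, and $w_i=v_i-\tfrac32(u_i^3-t_1u_i-t_3)$ for $i=1,2$. Put $$V_i=\tfrac13w_i^2-\frac{t_1t_2}{2}-\frac{3t_3^2}{4}-\tfrac32t_1t_3u_i-\tfrac34t_1^2u_i^2+t_2u_i^2+\tfrac32t_3u_i^3+\tfrac32t_1u_i^4-\tfrac34u_i^6 .$$ Then $(u_1,u_2,w_1,w_2)$ are canonical coordinates ($\{u_i,w_j\}=\delta_{ij}$, $\{u_1,u_2\}=\{w_1,w_2\}=0$), and the Hamiltonians take the St\"ackel form $$H_1=\frac{V_1-V_2}{u_1-u_2},\qquad H_2=\frac{u_2V_1-u_1V_2}{u_2-u_1}.$$ Equivalently, $w_i^2=\mathcal P(u_i)$ for $i=1,2$, where $$\mathcal P(u)=\frac94\Big(u^6-2t_1u^4-2t_3u^3+\big(t_1^2-\tfrac43t_2\big)u^2+2t_1t_3u+\tfrac23t_1t_2+t_3^2\Big)+3H_1u+3H_2 .$$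
   Context: $(q_1,q_2,p_1,p_2)$ carry the canonical bracket $\{q_i,p_j\}=\delta_{ij}$, $\{q_1,q_2\}=\{p_1,p_2\}=0$; $t_1,t_2,t_3$ are constants, $q_1\neq0$; $$B(u)=u^2-\frac{p_2-2q_2}{2q_1}u+\frac{q_1^2}{6}-\frac{t_1}{2}-\frac{p_1}{2q_1}+\frac{p_2^2/4-q_2^2+t_2}{2q_1^2},\qquad A(u)=q_1^2u+2q_1q_2,$$ $$H_1=\tfrac12p_1p_2-\frac{q_2}{4q_1}p_2^2+q_1^3q_2+\frac{q_2^3}{q_1}-t_1q_1q_2-\frac{t_2q_2}{q_1}-t_3q_1^2,$$ $$H_2=-\Big(\frac{p_2^2}{8q_1}+\frac{3t_2-3t_1q_1^2+q_1^4-3q_2^2}{6q_1}\Big)^2-\frac{t_1t_2}{2}+\frac14p_1^2-2t_3q_1q_2+\frac43q_1^2q_2^2 .$$ *)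

theory Defs
  imports "HOL-Analysis.Analysis"
begin

type_synonym ph = "complex \<times> complex \<times> complex \<times> complex"

definition q1c :: "ph \<Rightarrow> complex" where "q1c x = (case x of (a,b,c,d) \<Rightarrow> a)"
definition q2c :: "ph \<Rightarrow> complex" where "q2c x = (case x of (a,b,c,d) \<Rightarrow> b)"
definition p1c :: "ph \<Rightarrow> complex" where "p1c x = (case x of (a,b,c,d) \<Rightarrow> c)"
definition p2c :: "ph \<Rightarrow> complex" where "p2c x = (case x of (a,b,c,d) \<Rightarrow> d)"

definition d_q1 :: "(ph \<Rightarrow> complex) \<Rightarrow> ph \<Rightarrow> complex" where
  "d_q1 f x = (case x of (a,b,c,d) \<Rightarrow> deriv (\<lambda>z. f (z,b,c,d)) a)"
definition d_q2 :: "(ph \<Rightarrow> complex) \<Rightarrow> ph \<Rightarrow> complex" where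
  "d_q2 f x = (case x of (a,b,c,d) \<Rightarrow> deriv (\<lambda>z. f (a,z,c,d)) b)"
definition d_p1 :: "(ph \<Rightarrow> complex) \<Rightarrow> ph \<Rightarrow> complex" where
  "d_p1 f x = (case x of (a,b,c,d) \<Rightarrow> deriv (\<lambda>z. f (a,b,z,d)) c)"
definition d_p2 :: "(ph \<Rightarrow> complex) \<Rightarrow> ph \<Rightarrow> complex" where
  "d_p2 f x = (case x of (a,b,c,d) \<Rightarrow> deriv (\<lambda>z. f (a,b,c,z)) d)"

definition partially_diff :: "(ph \<Rightarrow> complex) \<Rightarrow> ph \<Rightarrow> bool" where
  "partially_diff f x = (case x of (a,b,c,d) \<Rightarrow>
      (\<lambda>z. f (z,b,c,d)) field_differentiable at a \<and>
      (\<lambda>z. f (a,z,c,d)) field_differentiable at b \<and>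
      (\<lambda>z. f (a,b,z,d)) field_differentiable at c \<and>
      (\<lambda>z. f (a,b,c,z)) field_differentiable at d)"

definition pbr :: "(ph \<Rightarrow> complex) \<Rightarrow> (ph \<Rightarrow> complex) \<Rightarrow> ph \<Rightarrow> complex" where
  "pbr f g x = d_q1 f x * d_p1 g x - d_p1 f x * d_q1 g x
             + d_q2 f x * d_p2 g x - d_p2 f x * d_q2 g x"

definition Bpol :: "complex \<Rightarrow> complex \<Rightarrow> complex \<Rightarrow> ph \<Rightarrow> complex" where
  "Bpol t1 t2 u x = (let q1 = q1c x; q2 = q2c x; p1 = p1c x; p2 = p2c x in
     u^2 - (p2 - 2*q2) / (2*q1) * u + q1^2/6 - t1/2 - p1/(2*q1)
       + (p2^2/4 - q2^2 + t2) / (2*q1^2))"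

definition Apol :: "complex \<Rightarrow> ph \<Rightarrow> complex" where
  "Apol u x = q1c x ^ 2 * u + 2 * q1c x * q2c x"

definition Ham1 :: "complex \<Rightarrow> complex \<Rightarrow> complex \<Rightarrow> ph \<Rightarrow> complex" where
  "Ham1 t1 t2 t3 x = (let q1 = q1c x; q2 = q2c x; p1 = p1c x; p2 = p2c x in
     p1*p2/2 - q2/(4*q1) * p2^2 + q1^3*q2 + q2^3/q1 - t1*q1*q2 - t2*q2/q1 - t3*q1^2)"

definition Ham2 :: "complex \<Rightarrow> complex \<Rightarrow> complex \<Rightarrow> ph \<Rightarrow> complex" where
  "Ham2 t1 t2 t3 x = (let q1 = q1c x; q2 = q2c x; p1 = p1c x; p2 = p2c x in
     - ((p2^2/(8*q1) + (3*t2 - 3*t1*q1^2 + q1^4 - 3*q2^2)/(6*q1))^2)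
     - t1*t2/2 + p1^2/4 - 2*t3*q1*q2 + 4/3*q1^2*q2^2)"

definition wfun :: "complex \<Rightarrow> complex \<Rightarrow> (ph \<Rightarrow> complex) \<Rightarrow> ph \<Rightarrow> complex" where
  "wfun t1 t3 u x = - Apol (u x) x - 3/2 * (u x ^ 3 - t1 * u x - t3)"

definition Vfun :: "complex \<Rightarrow> complex \<Rightarrow> complex \<Rightarrow> complex \<Rightarrow> complex \<Rightarrow> complex" where
  "Vfun t1 t2 t3 u w = w^2/3 - t1*t2/2 - 3*t3^2/4 - 3/2*t1*t3*u - 3/4*t1^2*u^2 + t2*u^2
      + 3/2*t3*u^3 + 3/2*t1*u^4 - 3/4*u^6"

definition Ppol :: "complex \<Rightarrow> complex \<Rightarrow> complex \<Rightarrow> complex \<Rightarrow> complex \<Rightarrow> complex \<Rightarrow> complex" where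
  "Ppol t1 t2 t3 h1 h2 u = 9/4 * (u^6 - 2*t1*u^4 - 2*t3*u^3 + (t1^2 - 4/3*t2)*u^2
      + 2*t1*t3*u + 2/3*t1*t2 + t3^2) + 3*h1*u + 3*h2"

end

theory Submission
  imports Defs
begin

(* Write B(u) = u^2 + b1 u + b0 and A(u) = a1 u + a0, with coefficients depending on the
   phase-space point.  The brackets of these four coefficients give Sklyanin's relations
     {B(u), B(v)} = 0,   {A(u), A(v)} = 0,   {B(u), A(v)} = (B(u) - B(v)) / (u - v) = u + v + b1.
   Differentiating B(u_i(x), x) = 0 gives B'(u_i) grad u_i = - grad B(u_i), where by Vieta
   B'(u_1) = u_1 - u_2 = - B'(u_2); and grad w_i = c_i grad u_i - grad A(u_i) for scalars c_i.
   Bilinearity of the bracket turns Sklyanin's relations into the canonical relations.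
   For the Staeckel form, eliminating p1 by means of B(u) = 0 shows that every root u of B
   satisfies V(u, w(u)) = H1 u + H2; these two linear equations at u_1 <> u_2 determine H1 and
   H2, and w^2 = P(u) is the same equation rewritten. *)

datatype coord = Q1 | Q2 | P1 | P2

lemma all_coord: "(\<forall>k. P k) \<longleftrightarrow> P Q1 \<and> P Q2 \<and> P P1 \<and> P P2"
  by (metis coord.exhaust)

fun slice :: "coord \<Rightarrow> ph \<Rightarrow> complex \<Rightarrow> ph" where
  "slice Q1 (a, b, c, d) = (\<lambda>z. (z, b, c, d))"
| "slice Q2 (a, b, c, d) = (\<lambda>z. (a, z, c, d))"
| "slice P1 (a, b, c, d) = (\<lambda>z. (a, b, z, d))"
| "slice P2 (a, b, c, d) = (\<lambda>z. (a, b, c, z))"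

fun component :: "coord \<Rightarrow> ph \<Rightarrow> complex" where
  "component Q1 = q1c"
| "component Q2 = q2c"
| "component P1 = p1c"
| "component P2 = p2c"

definition partial :: "coord \<Rightarrow> (ph \<Rightarrow> complex) \<Rightarrow> ph \<Rightarrow> complex" where
  "partial k f x = deriv (\<lambda>z. f (slice k x z)) (component k x)"

definition grad :: "(ph \<Rightarrow> complex) \<Rightarrow> ph \<Rightarrow> coord \<Rightarrow> complex" where
  "grad f x = (\<lambda>k. partial k f x)"

definition omega :: "(coord \<Rightarrow> complex) \<Rightarrow> (coord \<Rightarrow> complex) \<Rightarrow> complex" where
  "omega X Y = X Q1 * Y P1 - X P1 * Y Q1 + X Q2 * Y P2 - X P2 * Y Q2"

lemma pbr_eq_omega: "pbr f g x = omega (grad f x) (grad g x)"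
  by (cases x) (simp add: pbr_def omega_def grad_def partial_def d_q1_def d_q2_def d_p1_def d_p2_def
      q1c_def q2c_def p1c_def p2c_def)

lemma omega_self: "omega X X = 0"
  by (simp add: omega_def)

lemma omega_swap: "omega X Y = - omega Y X"
  by (simp add: omega_def)

lemma omega_diff_left: "omega (\<lambda>k. c * X k - Y k) Z = c * omega X Z - omega Y Z"
  by (simp add: omega_def algebra_simps)

lemma omega_diff_right: "omega X (\<lambda>k. c * Y k - Z k) = c * omega X Y - omega X Z"
  by (simp add: omega_def algebra_simps)

lemma omega_add_add:
  "omega (\<lambda>k. u * X k + Y k) (\<lambda>k. v * Z k + W k)
     = u * v * omega X Z + u * omega X W + v * omega Y Z + omega Y W"
  by (simp add: omega_def algebra_simps)

lemma omega_scaled_left: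
  assumes "e \<noteq> 0" "\<And>k. e * X k = Y k"
  shows "omega X Z = omega Y Z / e"
proof -
  have "X = (\<lambda>k. Y k / e)"
    using assms(1) by (simp add: fun_eq_iff assms(2)[symmetric])
  then show ?thesis
    using assms(1) by (simp add: omega_def field_simps)
qed

lemma partially_diff_iff:
  "partially_diff f x \<longleftrightarrow> (\<forall>k. (\<lambda>z. f (slice k x z)) field_differentiable at (component k x))"
  by (cases x) (simp add: all_coord partially_diff_def q1c_def q2c_def p1c_def p2c_def)

lemma slice_component [simp]: "slice k x (component k x) = x"
  by (cases k; cases x) (simp_all add: q1c_def q2c_def p1c_def p2c_def)

lemma open_vimage_slice: "open S \<Longrightarrow> open (slice k x -` S)"
  by (cases k; cases x) (auto intro!: continuous_open_vimage continuous_intros)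

lemma partial_eqI:
  "((\<lambda>z. f (slice k x z)) has_field_derivative D) (at (component k x)) \<Longrightarrow> partial k f x = D"
  unfolding partial_def by (rule DERIV_imp_deriv)

lemma has_field_derivative_partial:
  "partially_diff f x \<Longrightarrow>
     ((\<lambda>z. f (slice k x z)) has_field_derivative partial k f x) (at (component k x))"
  unfolding partially_diff_iff partial_def by (simp add: DERIV_deriv_iff_field_differentiable)

lemma partially_diff_gradI:
  assumes "\<And>k. ((\<lambda>z. f (slice k x z)) has_field_derivative D k) (at (component k x))"
  shows "partially_diff f x" and "grad f x = D"
  using assms partial_eqI[OF assms]
  by (auto simp: partially_diff_iff grad_def field_differentiable_def)

lemma partially_diff_uminus: "partially_diff f x \<Longrightarrow> partially_diff (\<lambda>y. - f y) x"
  by (simp add: partially_diff_iff field_differentiable_minus)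

lemma partial_uminus: "partially_diff f x \<Longrightarrow> partial k (\<lambda>y. - f y) x = - partial k f x"
  by (intro partial_eqI DERIV_minus has_field_derivative_partial)

lemma partial_eq_0_if_locally_zero:
  assumes "open S" "x \<in> S" "\<And>y. y \<in> S \<Longrightarrow> f y = 0"
  shows "partial k f x = 0"
proof (rule partial_eqI)
  have "((\<lambda>z. 0) has_field_derivative 0) (at (component k x))" by simp
  moreover have "open (slice k x -` S)"
    using assms(1) by (rule open_vimage_slice)
  ultimately show "((\<lambda>z. f (slice k x z)) has_field_derivative 0) (at (component k x))"
    by (rule has_field_derivative_transform_within_open) (use assms in auto)
qed

lemma partial_affine_comp:
  assumes "partially_diff u x" "partially_diff \<beta> x" "partially_diff \<gamma> x"
    and "(P has_field_derivative P') (at (u x))"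
  shows "partial k (\<lambda>y. P (u y) + \<beta> y * u y + \<gamma> y) x
           = (P' + \<beta> x) * partial k u x + (u x * partial k \<beta> x + partial k \<gamma> x)"
proof (rule partial_eqI)
  note derivs = has_field_derivative_partial[OF assms(1), of k]
    has_field_derivative_partial[OF assms(2), of k] has_field_derivative_partial[OF assms(3), of k]
  have P': "(P has_field_derivative P') (at (u (slice k x (component k x))))"
    using assms(4) by simp
  show "((\<lambda>z. P (u (slice k x z)) + \<beta> (slice k x z) * u (slice k x z) + \<gamma> (slice k x z))
          has_field_derivative (P' + \<beta> x) * partial k u x + (u x * partial k \<beta> x + partial k \<gamma> x))
          (at (component k x))"
    by (rule derivative_eq_intros DERIV_chain2[OF P' derivs(1)] derivs refl)+
      (simp add: algebra_simps)
qed

corollary partial_affine: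
  assumes "partially_diff \<beta> x" "partially_diff \<gamma> x"
  shows "partial k (\<lambda>y. c0 + \<beta> y * c + \<gamma> y) x = c * partial k \<beta> x + partial k \<gamma> x"
proof -
  have "partially_diff (\<lambda>_. c) x" "partial k (\<lambda>_. c) x = 0"
    by (simp_all add: partially_diff_def partial_eqI split: prod.splits)
  then show ?thesis
    using partial_affine_comp[of "\<lambda>_. c" x \<beta> \<gamma> "\<lambda>_. c0" 0, OF _ assms] by simp
qed

definition Bcoeff1 :: "ph \<Rightarrow> complex" where
  "Bcoeff1 x = (2 * q2c x - p2c x) / (2 * q1c x)"

definition Bcoeff0 :: "complex \<Rightarrow> complex \<Rightarrow> ph \<Rightarrow> complex" where
  "Bcoeff0 t1 t2 x = q1c x ^ 2 / 6 - t1 / 2 - p1c x / (2 * q1c x)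
     + (p2c x ^ 2 / 4 - q2c x ^ 2 + t2) / (2 * q1c x ^ 2)"

definition Acoeff1 :: "ph \<Rightarrow> complex" where
  "Acoeff1 x = q1c x ^ 2"

definition Acoeff0 :: "ph \<Rightarrow> complex" where
  "Acoeff0 x = 2 * q1c x * q2c x"

lemma Bpol_eq: "Bpol t1 t2 c = (\<lambda>y. c ^ 2 + Bcoeff1 y * c + Bcoeff0 t1 t2 y)"
  by (simp add: fun_eq_iff Bpol_def Bcoeff1_def Bcoeff0_def Let_def divide_simps)
    (simp add: algebra_simps)

lemma Apol_eq: "Apol c = (\<lambda>y. Acoeff1 y * c + Acoeff0 y)"
  by (simp add: fun_eq_iff Apol_def Acoeff1_def Acoeff0_def)

lemma Bcoeff1_slice_deriv:
  assumes "q1c x \<noteq> 0"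
  shows "((\<lambda>z. Bcoeff1 (slice k x z)) has_field_derivative
           (case k of Q1 \<Rightarrow> - Bcoeff1 x / q1c x | Q2 \<Rightarrow> 1 / q1c x | P1 \<Rightarrow> 0
                    | P2 \<Rightarrow> - 1 / (2 * q1c x))) (at (component k x))"
  using assms by (cases x; cases k)
    (auto intro!: derivative_eq_intros
      simp: Bcoeff1_def q1c_def q2c_def p1c_def p2c_def field_simps power2_eq_square)

lemma Bcoeff0_slice_deriv:
  assumes "q1c x \<noteq> 0"
  shows "((\<lambda>z. Bcoeff0 t1 t2 (slice k x z)) has_field_derivative
           (case k of
              Q1 \<Rightarrow> q1c x / 3 + p1c x / (2 * q1c x ^ 2)
                     - (p2c x ^ 2 / 4 - q2c x ^ 2 + t2) / q1c x ^ 3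
            | Q2 \<Rightarrow> - q2c x / q1c x ^ 2 | P1 \<Rightarrow> - 1 / (2 * q1c x)
            | P2 \<Rightarrow> p2c x / (4 * q1c x ^ 2))) (at (component k x))"
  using assms by (cases x; cases k)
    (auto intro!: derivative_eq_intros
      simp: Bcoeff0_def q1c_def q2c_def p1c_def p2c_def field_simps eval_nat_numeral)

lemma Acoeff1_slice_deriv:
  "((\<lambda>z. Acoeff1 (slice k x z)) has_field_derivative
     (case k of Q1 \<Rightarrow> 2 * q1c x | _ \<Rightarrow> 0)) (at (component k x))"
  by (cases x; cases k)
    (auto intro!: derivative_eq_intros simp: Acoeff1_def q1c_def q2c_def p1c_def p2c_def)

lemma Acoeff0_slice_deriv:
  "((\<lambda>z. Acoeff0 (slice k x z)) has_field_derivative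
     (case k of Q1 \<Rightarrow> 2 * q2c x | Q2 \<Rightarrow> 2 * q1c x | _ \<Rightarrow> 0)) (at (component k x))"
  by (cases x; cases k)
    (auto intro!: derivative_eq_intros simp: Acoeff0_def q1c_def q2c_def p1c_def p2c_def)

lemmas Bcoeff1_grad = partially_diff_gradI[OF Bcoeff1_slice_deriv]
lemmas Bcoeff0_grad = partially_diff_gradI[OF Bcoeff0_slice_deriv]
lemmas Acoeff1_grad = partially_diff_gradI[OF Acoeff1_slice_deriv]
lemmas Acoeff0_grad = partially_diff_gradI[OF Acoeff0_slice_deriv]

lemma coefficient_brackets:
  assumes "q1c x \<noteq> 0"
  shows "pbr Bcoeff1 (Bcoeff0 t1 t2) x = 0" "pbr Acoeff1 Acoeff0 x = 0"
    and "pbr Bcoeff1 Acoeff1 x = 0" "pbr Bcoeff1 Acoeff0 x = 1"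
    and "pbr (Bcoeff0 t1 t2) Acoeff1 x = 1" "pbr (Bcoeff0 t1 t2) Acoeff0 x = Bcoeff1 x"
  using assms
  by (simp_all add: pbr_eq_omega omega_def Bcoeff1_grad Bcoeff0_grad Acoeff1_grad Acoeff0_grad)
    (simp_all add: Bcoeff1_def field_simps eval_nat_numeral)

lemma grad_Bpol: "q1c x \<noteq> 0 \<Longrightarrow>
    grad (Bpol t1 t2 c) x = (\<lambda>k. c * grad Bcoeff1 x k + grad (Bcoeff0 t1 t2) x k)"
  unfolding Bpol_eq by (simp add: grad_def partial_affine Bcoeff1_grad Bcoeff0_grad)

lemma grad_Apol: "grad (Apol c) x = (\<lambda>k. c * grad Acoeff1 x k + grad Acoeff0 x k)"
proof -
  have A: "Apol c = (\<lambda>y. 0 + Acoeff1 y * c + Acoeff0 y)"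
    by (simp add: Apol_eq)
  show ?thesis
    unfolding grad_def A partial_affine[OF Acoeff1_grad(1) Acoeff0_grad(1)] ..
qed

lemma Sklyanin_brackets:
  assumes "q1c x \<noteq> 0"
  shows "pbr (Bpol t1 t2 u) (Bpol t1 t2 v) x = 0"
    and "pbr (Apol u) (Apol v) x = 0"
    and "pbr (Bpol t1 t2 u) (Apol v) x = u + v + Bcoeff1 x"
proof -
  note coeff = coefficient_brackets[OF assms, unfolded pbr_eq_omega]
  have coeff_swapped: "omega (grad (Bcoeff0 t1 t2) x) (grad Bcoeff1 x) = 0"
      "omega (grad Acoeff0 x) (grad Acoeff1 x) = 0"
    using coeff(1,2) omega_swap[of "grad (Bcoeff0 t1 t2) x" "grad Bcoeff1 x"]
      omega_swap[of "grad Acoeff0 x" "grad Acoeff1 x"] by simp_all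
  show "pbr (Bpol t1 t2 u) (Bpol t1 t2 v) x = 0" "pbr (Apol u) (Apol v) x = 0"
      "pbr (Bpol t1 t2 u) (Apol v) x = u + v + Bcoeff1 x"
    unfolding pbr_eq_omega grad_Bpol[OF assms] grad_Apol omega_add_add
    by (simp_all add: coeff coeff_swapped omega_self)
qed

lemma partial_root:
  assumes "open S" "x \<in> S" "q1c x \<noteq> 0" "\<And>y. y \<in> S \<Longrightarrow> Bpol t1 t2 (u y) y = 0"
    and "partially_diff u x"
  shows "(2 * u x + Bcoeff1 x) * partial k u x = - partial k (Bpol t1 t2 (u x)) x"
proof -
  note coeffs = Bcoeff1_grad(1)[OF assms(3)] Bcoeff0_grad(1)[OF assms(3)]
  have sq: "((\<lambda>c. c ^ 2) has_field_derivative 2 * u x) (at (u x))"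
    by (auto intro!: derivative_eq_intros)
  have "0 = partial k (\<lambda>y. Bpol t1 t2 (u y) y) x"
    using partial_eq_0_if_locally_zero[OF assms(1,2,4)] by simp
  also have "\<dots> = (2 * u x + Bcoeff1 x) * partial k u x + partial k (Bpol t1 t2 (u x)) x"
    using partial_affine_comp[OF assms(5) coeffs sq] by (simp add: Bpol_eq partial_affine[OF coeffs])
  finally show ?thesis by (simp add: eq_neg_iff_add_eq_0)
qed

lemma partial_wfun:
  assumes "partially_diff u x"
  shows "partial k (wfun t1 t3 u) x
           = (- 3/2 * (3 * u x ^ 2 - t1) - q1c x ^ 2) * partial k u x - partial k (Apol (u x)) x"
proof -
  have w: "wfun t1 t3 u
             = (\<lambda>y. - 3/2 * (u y ^ 3 - t1 * u y - t3) + (- Acoeff1 y) * u y + (- Acoeff0 y))"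
    by (simp add: wfun_def Apol_def Acoeff1_def Acoeff0_def fun_eq_iff algebra_simps)
  have P: "((\<lambda>c. - 3/2 * (c ^ 3 - t1 * c - t3)) has_field_derivative (- 3/2 * (3 * u x ^ 2 - t1)))
             (at (u x))"
    by (auto intro!: derivative_eq_intros)
  show ?thesis
    unfolding w partial_affine_comp[OF assms partially_diff_uminus[OF Acoeff1_grad(1)]
        partially_diff_uminus[OF Acoeff0_grad(1)] P]
    by (simp add: partial_uminus Acoeff1_grad(1) Acoeff0_grad(1)
        grad_Apol[unfolded grad_def fun_eq_iff] algebra_simps)
      (simp add: Acoeff1_def)
qed

lemma omega_canonical:
  fixes bU bV aU aV gU gV wU wV :: "coord \<Rightarrow> complex"
  assumes "U \<noteq> V"
    and BB: "omega bU bV = 0" and AA: "omega aU aV = 0"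
    and BA: "omega bU aU = U - V" "omega bV aV = V - U" "omega bU aV = 0" "omega bV aU = 0"
    and gU: "\<And>k. (V - U) * gU k = bU k" and gV: "\<And>k. (U - V) * gV k = bV k"
    and wU: "wU = (\<lambda>k. cU * gU k - aU k)" and wV: "wV = (\<lambda>k. cV * gV k - aV k)"
  shows "omega gU wU = 1" "omega gV wV = 1" "omega gU wV = 0" "omega gV wU = 0"
    and "omega gU gV = 0" "omega wU wV = 0"
proof -
  have UV: "V - U \<noteq> 0" "U - V \<noteq> 0" using assms(1) by auto
  note gU' = omega_scaled_left[where X = gU and Y = bU, OF UV(1) gU]
  note gV' = omega_scaled_left[where X = gV and Y = bV, OF UV(2) gV]
  have gUa: "omega gU aU = -1" "omega gU aV = 0"
    using UV by (simp_all add: gU' BA field_simps)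
  have gVa: "omega gV aV = -1" "omega gV aU = 0"
    using UV by (simp_all add: gV' BA field_simps)
  have gUgV: "omega gU gV = 0"
  proof -
    have "omega gU gV = - omega gV bU / (V - U)"
      using gU'[of gV] omega_swap[of bU gV] by simp
    also have "omega gV bU = omega bV bU / (U - V)"
      by (rule gV')
    also have "omega bV bU = 0"
      using BB omega_swap[of bV bU] by simp
    finally show ?thesis by simp
  qed
  show "omega gU gV = 0" by (fact gUgV)
  show "omega gU wU = 1" "omega gV wV = 1" "omega gU wV = 0" "omega gV wU = 0"
    using omega_swap[of gV gU] by (simp_all add: wU wV omega_diff_right omega_self gUa gVa gUgV)
  show "omega wU wV = 0"
    using omega_swap[of aU gV] omega_swap[of gV gU]
    by (simp add: wU wV omega_diff_left omega_diff_right gUa gVa gUgV AA)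
qed

lemma quadratic_roots_sum:
  fixes U V p q :: "'a::idom"
  assumes "U ^ 2 + p * U + q = 0" "V ^ 2 + p * V + q = 0" "U \<noteq> V"
  shows "p = - U - V"
proof -
  have "(U - V) * (U + V + p) = (U ^ 2 + p * U + q) - (V ^ 2 + p * V + q)"
    by (simp add: algebra_simps power2_eq_square)
  then have "(U - V) * (U + V + p) = 0"
    using assms(1,2) by simp
  then have "U + V + p = 0"
    using assms(3) by simp
  then show ?thesis
    by (simp add: eq_neg_iff_add_eq_0 algebra_simps)
qed

lemma canonical_coordinates:
  assumes "open S" "x \<in> S" "q1c x \<noteq> 0"
    and "\<And>y. y \<in> S \<Longrightarrow> Bpol t1 t2 (u1 y) y = 0" "\<And>y. y \<in> S \<Longrightarrow> Bpol t1 t2 (u2 y) y = 0"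
    and "u1 x \<noteq> u2 x" "partially_diff u1 x" "partially_diff u2 x"
  shows "pbr u1 (wfun t1 t3 u1) x = 1" "pbr u2 (wfun t1 t3 u2) x = 1"
    and "pbr u1 (wfun t1 t3 u2) x = 0" "pbr u2 (wfun t1 t3 u1) x = 0"
    and "pbr u1 u2 x = 0" "pbr (wfun t1 t3 u1) (wfun t1 t3 u2) x = 0"
proof -
  have sum: "Bcoeff1 x = - u1 x - u2 x"
    using quadratic_roots_sum[of "u1 x" "Bcoeff1 x" "Bcoeff0 t1 t2 x" "u2 x"] assms(2,4-6)
    by (simp add: Bpol_eq)
  have g1: "(u2 x - u1 x) * grad u1 x k = grad (Bpol t1 t2 (u1 x)) x k" for k
    using partial_root[OF assms(1-4,7), of k] by (simp add: grad_def sum algebra_simps)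
  have g2: "(u1 x - u2 x) * grad u2 x k = grad (Bpol t1 t2 (u2 x)) x k" for k
    using partial_root[OF assms(1-3,5,8), of k] by (simp add: grad_def sum algebra_simps)
  have w1: "grad (wfun t1 t3 u1) x
             = (\<lambda>k. (- 3/2 * (3 * u1 x ^ 2 - t1) - q1c x ^ 2) * grad u1 x k
                     - grad (Apol (u1 x)) x k)"
    by (simp add: grad_def partial_wfun[OF assms(7)])
  have w2: "grad (wfun t1 t3 u2) x
             = (\<lambda>k. (- 3/2 * (3 * u2 x ^ 2 - t1) - q1c x ^ 2) * grad u2 x k
                     - grad (Apol (u2 x)) x k)"
    by (simp add: grad_def partial_wfun[OF assms(8)])
  note Sk = Sklyanin_brackets[OF assms(3), unfolded pbr_eq_omega]
  have BA: "omega (grad (Bpol t1 t2 (u1 x)) x) (grad (Apol (u1 x)) x) = u1 x - u2 x"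
    "omega (grad (Bpol t1 t2 (u2 x)) x) (grad (Apol (u2 x)) x) = u2 x - u1 x"
    "omega (grad (Bpol t1 t2 (u1 x)) x) (grad (Apol (u2 x)) x) = 0"
    "omega (grad (Bpol t1 t2 (u2 x)) x) (grad (Apol (u1 x)) x) = 0"
    by (simp_all add: Sk(3) sum)
  note canonical = omega_canonical[OF assms(6) Sk(1,2) BA g1 g2 w1 w2]
  show "pbr u1 (wfun t1 t3 u1) x = 1" "pbr u2 (wfun t1 t3 u2) x = 1"
    and "pbr u1 (wfun t1 t3 u2) x = 0" "pbr u2 (wfun t1 t3 u1) x = 0"
    and "pbr u1 u2 x = 0" "pbr (wfun t1 t3 u1) (wfun t1 t3 u2) x = 0"
    by (simp_all only: pbr_eq_omega canonical)
qed

lemma Vfun_at_root: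
  assumes "q1c x \<noteq> 0" "Bpol t1 t2 u x = 0"
  shows "Vfun t1 t2 t3 u (- Apol u x - 3/2 * (u ^ 3 - t1 * u - t3))
           = Ham1 t1 t2 t3 x * u + Ham2 t1 t2 t3 x"
proof -
  obtain a b c d where x: "x = (a, b, c, d)" by (cases x)
  have a: "a \<noteq> 0" using assms(1) by (simp add: x q1c_def)
  define B where "B = u ^ 2 - (d - 2 * b) / (2 * a) * u + a ^ 2 / 6 - t1 / 2 - c / (2 * a)
                        + (d ^ 2 / 4 - b ^ 2 + t2) / (2 * a ^ 2)"
  have "B = 0"
    using assms(2) by (simp add: B_def x Bpol_def q1c_def q2c_def p1c_def p2c_def)
  moreover have "c = 2 * a * (u ^ 2 - (d - 2 * b) / (2 * a) * u + a ^ 2 / 6 - t1 / 2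
                              + (d ^ 2 / 4 - b ^ 2 + t2) / (2 * a ^ 2) - B)"
    using a by (simp add: B_def algebra_simps)
  ultimately have c: "c = 2 * a * (u ^ 2 - (d - 2 * b) / (2 * a) * u + a ^ 2 / 6 - t1 / 2
                              + (d ^ 2 / 4 - b ^ 2 + t2) / (2 * a ^ 2))"
    by simp
  have H: "Ham1 t1 t2 t3 x = c*d/2 - b/(4*a) * d^2 + a^3*b + b^3/a - t1*a*b - t2*b/a - t3*a^2"
    "Ham2 t1 t2 t3 x = - ((d^2/(8*a) + (3*t2 - 3*t1*a^2 + a^4 - 3*b^2)/(6*a))^2)
       - t1*t2/2 + c^2/4 - 2*t3*a*b + 4/3*a^2*b^2"
    by (simp_all add: x Ham1_def Ham2_def q1c_def q2c_def p1c_def p2c_def)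
  show ?thesis
    unfolding H Apol_def Vfun_def
    by (simp add: x q1c_def q2c_def) (simp add: c a field_simps eval_nat_numeral)
qed

lemma Ppol_eq: "Ppol t1 t2 t3 h1 h2 u = w ^ 2 + 3 * (h1 * u + h2 - Vfun t1 t2 t3 u w)"
  by (simp add: Ppol_def Vfun_def field_simps)

lemma line_through_two_points:
  fixes u1 u2 y1 y2 h1 h2 :: "'a::field"
  assumes "u1 \<noteq> u2" "y1 = h1 * u1 + h2" "y2 = h1 * u2 + h2"
  shows "h1 = (y1 - y2) / (u1 - u2)" "h2 = (u2 * y1 - u1 * y2) / (u2 - u1)"
  using assms by (simp_all add: field_simps)

lemma Staeckel_form:
  fixes t1 t2 t3 :: complex and u1 u2 :: "ph \<Rightarrow> complex"
  assumes "q1c x \<noteq> 0" "Bpol t1 t2 (u1 x) x = 0" "Bpol t1 t2 (u2 x) x = 0" "u1 x \<noteq> u2 x"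
  defines "V1 \<equiv> Vfun t1 t2 t3 (u1 x) (wfun t1 t3 u1 x)"
    and "V2 \<equiv> Vfun t1 t2 t3 (u2 x) (wfun t1 t3 u2 x)"
  shows "Ham1 t1 t2 t3 x = (V1 - V2) / (u1 x - u2 x)"
    and "Ham2 t1 t2 t3 x = (u2 x * V1 - u1 x * V2) / (u2 x - u1 x)"
    and "wfun t1 t3 u1 x ^ 2 = Ppol t1 t2 t3 (Ham1 t1 t2 t3 x) (Ham2 t1 t2 t3 x) (u1 x)"
    and "wfun t1 t3 u2 x ^ 2 = Ppol t1 t2 t3 (Ham1 t1 t2 t3 x) (Ham2 t1 t2 t3 x) (u2 x)"
proof -
  have V1: "V1 = Ham1 t1 t2 t3 x * u1 x + Ham2 t1 t2 t3 x"
    using Vfun_at_root[OF assms(1,2)] by (simp add: V1_def wfun_def)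
  have V2: "V2 = Ham1 t1 t2 t3 x * u2 x + Ham2 t1 t2 t3 x"
    using Vfun_at_root[OF assms(1,3)] by (simp add: V2_def wfun_def)
  show "Ham1 t1 t2 t3 x = (V1 - V2) / (u1 x - u2 x)"
    and "Ham2 t1 t2 t3 x = (u2 x * V1 - u1 x * V2) / (u2 x - u1 x)"
    by (fact line_through_two_points[OF assms(4) V1 V2])+
  show "wfun t1 t3 u1 x ^ 2 = Ppol t1 t2 t3 (Ham1 t1 t2 t3 x) (Ham2 t1 t2 t3 x) (u1 x)"
    using V1 by (simp add: Ppol_eq[where w = "wfun t1 t3 u1 x"] V1_def)
  show "wfun t1 t3 u2 x ^ 2 = Ppol t1 t2 t3 (Ham1 t1 t2 t3 x) (Ham2 t1 t2 t3 x) (u2 x)"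
    using V2 by (simp add: Ppol_eq[where w = "wfun t1 t3 u2 x"] V2_def)
qed

theorem mainTheorem9:
  fixes t1 t2 t3 :: complex
    and S :: "ph set"
    and u1 u2 :: "ph \<Rightarrow> complex"
  assumes "open S"
    and "\<And>x. x \<in> S \<Longrightarrow> q1c x \<noteq> 0"
    and "\<And>x. x \<in> S \<Longrightarrow> Bpol t1 t2 (u1 x) x = 0"
    and "\<And>x. x \<in> S \<Longrightarrow> Bpol t1 t2 (u2 x) x = 0"
    and "\<And>x. x \<in> S \<Longrightarrow> u1 x \<noteq> u2 x"
    and "\<And>x. x \<in> S \<Longrightarrow> partially_diff u1 x"
    and "\<And>x. x \<in> S \<Longrightarrow> partially_diff u2 x"
  shows "\<forall>x\<in>S.
    (let w1 = wfun t1 t3 u1; w2 = wfun t1 t3 u2;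
         V1 = Vfun t1 t2 t3 (u1 x) (w1 x); V2 = Vfun t1 t2 t3 (u2 x) (w2 x) in
      pbr u1 w1 x = 1 \<and> pbr u2 w2 x = 1 \<and> pbr u1 w2 x = 0 \<and> pbr u2 w1 x = 0 \<and>
      pbr u1 u2 x = 0 \<and> pbr w1 w2 x = 0 \<and>
      Ham1 t1 t2 t3 x = (V1 - V2) / (u1 x - u2 x) \<and>
      Ham2 t1 t2 t3 x = (u2 x * V1 - u1 x * V2) / (u2 x - u1 x) \<and>
      w1 x ^ 2 = Ppol t1 t2 t3 (Ham1 t1 t2 t3 x) (Ham2 t1 t2 t3 x) (u1 x) \<and>
      w2 x ^ 2 = Ppol t1 t2 t3 (Ham1 t1 t2 t3 x) (Ham2 t1 t2 t3 x) (u2 x))"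
  unfolding Let_def
  by (intro ballI conjI canonical_coordinates[OF assms(1) _ assms(2-4) assms(5-7)]
      Staeckel_form[OF assms(2-5)])

end
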